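(* For any $H>1$, $\zeta\in[0,1]$ and $c\in(0,1/6]$, there exist two episodic MDPs $\mathcal{M}^{\mathsf{real},1},\mathcal{M}^{\mathsf{real},2}$ (with common state space, action set, rewards, initial state and horizon $H$) and a finite function class $\mathcal{F}$ such that each of $\mathcal{M}^{\mathsf{real},1},\mathcal{M}^{\mathsf{real},2}$ is a low-rank MDP and $\mathcal{F}$ is Bellman complete with respect to each of them, and such that, for an absolute constant $c_0>0$, whenever $T< c_0\,2^{H/2}$, running the $\zeta$-greedy exploration protocol for $T$ episodes (with any rule for proposing $\widehat{\pi}$ from the collected data) yields $$\sup_{\mathcal{M}\in\{\mathcal{M}^{\mathsf{real},1},\mathcal{M}^{\mathsf{real},2}\}}\mathbb{E}^{\mathcal{M}}\big[V_0^{\mathcal{M},\star}-V_0^{\mathcal{M},\widehat{\pi}}\big]\ge c/32.$$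
   Context: Episodic MDP $\mathcal{M}=(\mathcal{S},\mathcal{A},\{P_h\},\{r_h\},s_1,H)$ with finite action set $\mathcal{A}$, deterministic rewards $r_h\in[0,1]$; $V_0^{\mathcal{M},\pi}$ is the expected total reward of $\pi$ from $s_1$ and $V_0^{\mathcal{M},\star}=\sup_\pi V_0^{\mathcal{M},\pi}$. Low-rank MDP of dimension $d$: $P_h(\cdot\mid s,a)=\langle\boldsymbol{\phi}(s,a),\boldsymbol{\mu}_h(\cdot)\rangle$ for some $\boldsymbol{\phi}:\mathcal{S}\times\mathcal{A}\to\mathbb{R}^d$ with $\|\boldsymbol{\phi}\|_2\le1$ and $\mathbb{R}^d$-valued signed measures $\boldsymbol{\mu}_h$ with $\|\int|\mathrm{d}\boldsymbol{\mu}_h|\|_2\le\sqrt d$. $\mathcal{F}=\mathcal{F}_1\times\cdots\times\mathcal{F}_H$ with $\mathcal{F}_h$ functions $\mathcal{S}\times\mathcal{A}\to[0,H]$, $f_{H+1}=0$; Bellman operator $\mathcal{T}f_{h+1}(s,a)=r_h(s,a)+\mathbb{E}_{s'\sim P_h(\cdot\mid s,a)}\max_{a'}f_{h+1}(s',a')$; Bellman complete means $\mathcal{T}f_{h+1}\in\mathcal{F}_h$ for all $f_{h+1}\in\mathcal{F}_{h+1}$. For $f$, $\pi^f_h(s)=\arg\max_a f_h(s,a)$. $\zeta$-greedy exploration protocol on an MDP $\mathcal{M}$ with time horizon $T$: interact for $T$ episodes; at every step $h$ of episode $t+1$ play $\pi^{f^t}_h(s)$ with probability $1-\zeta$ and an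 action drawn uniformly from $\mathcal{A}$ otherwise, where $f_h^t=\arg\min_{f\in\mathcal{F}_h}\sum_{t'=1}^t(f(s_h^{t'},a_h^{t'})-r_h^{t'}-\max_{a'}f^t_{h+1}(s^{t'}_{h+1},a'))^2$ computed on the data collected through episode $t$; afterwards, using the collected data in any way, propose a policy $\widehat{\pi}$. *)

theory Defs
  imports "HOL-Probability.Probability"
begin

text \<open>Steps are h = 1..H. A (randomized Markov) policy is
  pol h s :: nat pmf. An episode is the list [(s_1,a_1),...,(s_H,a_H)].\<close>

definition act_pmf :: "real \<Rightarrow> nat set \<Rightarrow> nat \<Rightarrow> nat pmf" where
  "act_pmf \<zeta> A a0 = bind_pmf (bernoulli_pmf \<zeta>) (\<lambda>b. if b then pmf_of_set A else return_pmf a0)"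

primrec roll :: "(nat \<Rightarrow> nat \<Rightarrow> nat \<Rightarrow> nat pmf) \<Rightarrow> (nat \<Rightarrow> nat \<Rightarrow> nat pmf) \<Rightarrow> nat \<Rightarrow> nat \<Rightarrow> nat
                 \<Rightarrow> (nat \<times> nat) list pmf" where
  "roll P pol h 0 s = return_pmf []"
| "roll P pol h (Suc k) s =
     bind_pmf (pol h s) (\<lambda>a. bind_pmf (P h s a)
       (\<lambda>s'. map_pmf (\<lambda>rest. (s, a) # rest) (roll P pol (Suc h) k s')))"

definition ep_return :: "(nat \<Rightarrow> nat \<Rightarrow> nat \<Rightarrow> real) \<Rightarrow> (nat \<times> nat) list \<Rightarrow> real" where
  "ep_return r ep = (\<Sum>i<length ep. r (Suc i) (fst (ep ! i)) (snd (ep ! i)))"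

definition pol_value :: "(nat \<Rightarrow> nat \<Rightarrow> nat \<Rightarrow> nat pmf) \<Rightarrow> (nat \<Rightarrow> nat \<Rightarrow> nat \<Rightarrow> real) \<Rightarrow> nat \<Rightarrow> nat
                     \<Rightarrow> (nat \<Rightarrow> nat \<Rightarrow> nat pmf) \<Rightarrow> real" where
  "pol_value P r s1 H pol = measure_pmf.expectation (roll P pol 1 H s1) (ep_return r)"

definition opt_value :: "(nat \<Rightarrow> nat \<Rightarrow> nat \<Rightarrow> nat pmf) \<Rightarrow> (nat \<Rightarrow> nat \<Rightarrow> nat \<Rightarrow> real) \<Rightarrow> nat \<Rightarrow> nat
                         \<Rightarrow> nat set \<Rightarrow> real" where
  "opt_value P r s1 H A = (SUP pol \<in> {pol. \<forall>h s. set_pmf (pol h s) \<subseteq> A}. pol_value P r s1 H pol)"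

text \<open>Low-rank MDP of dimension d (on the countable state space nat, a signed measure is given by
  an absolutely summable point-mass function; vectors in R^d are functions on {..<d}).\<close>
definition low_rank_dim :: "(nat \<Rightarrow> nat \<Rightarrow> nat \<Rightarrow> nat pmf) \<Rightarrow> nat set \<Rightarrow> nat \<Rightarrow> nat \<Rightarrow> bool" where
  "low_rank_dim P A H d \<longleftrightarrow>
     (\<exists>(\<phi> :: nat \<Rightarrow> nat \<Rightarrow> nat \<Rightarrow> real) (\<mu> :: nat \<Rightarrow> nat \<Rightarrow> nat \<Rightarrow> real).
        (\<forall>s. \<forall>a\<in>A. sqrt (\<Sum>i<d. (\<phi> s a i)\<^sup>2) \<le> 1) \<and>
        (\<forall>h\<in>{1..H}.
           (\<forall>i<d. summable (\<lambda>s'. \<bar>\<mu> h s' i\<bar>)) \<and>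
           sqrt (\<Sum>i<d. (\<Sum>s'. \<bar>\<mu> h s' i\<bar>)\<^sup>2) \<le> sqrt (real d) \<and>
           (\<forall>s. \<forall>a\<in>A. \<forall>s'. pmf (P h s a) s' = (\<Sum>i<d. \<phi> s a i * \<mu> h s' i))))"

definition low_rank :: "(nat \<Rightarrow> nat \<Rightarrow> nat \<Rightarrow> nat pmf) \<Rightarrow> nat set \<Rightarrow> nat \<Rightarrow> bool" where
  "low_rank P A H \<longleftrightarrow> (\<exists>d. low_rank_dim P A H d)"

definition bellman_op :: "(nat \<Rightarrow> nat \<Rightarrow> nat \<Rightarrow> nat pmf) \<Rightarrow> (nat \<Rightarrow> nat \<Rightarrow> nat \<Rightarrow> real) \<Rightarrow> nat set
                          \<Rightarrow> nat \<Rightarrow> (nat \<Rightarrow> nat \<Rightarrow> real) \<Rightarrow> nat \<Rightarrow> nat \<Rightarrow> real" where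
  "bellman_op P r A h g s a =
     r h s a + measure_pmf.expectation (P h s a) (\<lambda>s'. Max ((\<lambda>a'. g s' a') ` A))"

text \<open>F = F_1 x ... x F_H given by Fc h (h = 1..H); f_{H+1} = 0. Functions are compared on S x A.\<close>
definition bellman_complete :: "(nat \<Rightarrow> nat \<Rightarrow> nat \<Rightarrow> nat pmf) \<Rightarrow> (nat \<Rightarrow> nat \<Rightarrow> nat \<Rightarrow> real) \<Rightarrow> nat set
                                \<Rightarrow> nat \<Rightarrow> (nat \<Rightarrow> (nat \<Rightarrow> nat \<Rightarrow> real) set) \<Rightarrow> bool" where
  "bellman_complete P r A H Fc \<longleftrightarrow>
     (\<forall>h\<in>{1..<H}. \<forall>g\<in>Fc (Suc h). \<exists>f\<in>Fc h. \<forall>s. \<forall>a\<in>A. f s a = bellman_op P r A h g s a) \<and>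
     (\<exists>f\<in>Fc H. \<forall>s. \<forall>a\<in>A. f s a = bellman_op P r A H (\<lambda>_ _. 0) s a)"

text \<open>Squared regression loss at step h of candidate g, with next-step function gnext, on data D
  (a list of episodes). For h = H, gnext = 0, so the (out of range) state s_{H+1} is irrelevant.\<close>
definition sq_loss :: "(nat \<Rightarrow> nat \<Rightarrow> nat \<Rightarrow> real) \<Rightarrow> nat set \<Rightarrow> nat \<Rightarrow> (nat \<Rightarrow> nat \<Rightarrow> real)
                       \<Rightarrow> (nat \<Rightarrow> nat \<Rightarrow> real) \<Rightarrow> (nat \<times> nat) list list \<Rightarrow> real" where
  "sq_loss r A h g gnext D =
     sum_list (map (\<lambda>ep. (g (fst (ep ! (h - 1))) (snd (ep ! (h - 1)))
                           - r h (fst (ep ! (h - 1))) (snd (ep ! (h - 1)))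
                           - Max ((\<lambda>a'. gnext (fst (ep ! h)) a') ` A))\<^sup>2) D)"

text \<open>An arbitrary (data-dependent) tie-breaking rule returning a least-squares minimiser in Fc h.\<close>
definition is_reg_oracle :: "(nat \<Rightarrow> nat \<Rightarrow> nat \<Rightarrow> real) \<Rightarrow> nat set \<Rightarrow> nat \<Rightarrow> (nat \<Rightarrow> (nat \<Rightarrow> nat \<Rightarrow> real) set)
      \<Rightarrow> (nat \<Rightarrow> (nat \<times> nat) list list \<Rightarrow> (nat \<Rightarrow> nat \<Rightarrow> real) \<Rightarrow> (nat \<Rightarrow> nat \<Rightarrow> real)) \<Rightarrow> bool" where
  "is_reg_oracle r A H Fc ora \<longleftrightarrow>
     (\<forall>h\<in>{1..H}. \<forall>D gnext. ora h D gnext \<in> Fc h \<and>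
        (\<forall>f\<in>Fc h. sq_loss r A h (ora h D gnext) gnext D \<le> sq_loss r A h f gnext D))"

primrec fit_rev :: "(nat \<Rightarrow> (nat \<times> nat) list list \<Rightarrow> (nat \<Rightarrow> nat \<Rightarrow> real) \<Rightarrow> (nat \<Rightarrow> nat \<Rightarrow> real))
                    \<Rightarrow> nat \<Rightarrow> (nat \<times> nat) list list \<Rightarrow> nat \<Rightarrow> (nat \<Rightarrow> nat \<Rightarrow> real)" where
  "fit_rev ora H D 0 = ora H D (\<lambda>_ _. 0)"
| "fit_rev ora H D (Suc m) = ora (H - Suc m) D (fit_rev ora H D m)"

text \<open>f^t_h computed backwards from f_{H+1} = 0 on data D.\<close>
definition fitted :: "(nat \<Rightarrow> (nat \<times> nat) list list \<Rightarrow> (nat \<Rightarrow> nat \<Rightarrow> real) \<Rightarrow> (nat \<Rightarrow> nat \<Rightarrow> real))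
                      \<Rightarrow> nat \<Rightarrow> (nat \<times> nat) list list \<Rightarrow> nat \<Rightarrow> (nat \<Rightarrow> nat \<Rightarrow> real)" where
  "fitted ora H D h = fit_rev ora H D (H - h)"

text \<open>An arbitrary tie-breaking rule for the greedy policy pi^f_h(s) = argmax_a f_h(s,a).\<close>
definition is_greedy_sel :: "nat set \<Rightarrow> (nat \<Rightarrow> (nat \<Rightarrow> nat \<Rightarrow> real) \<Rightarrow> nat \<Rightarrow> nat) \<Rightarrow> bool" where
  "is_greedy_sel A gsel \<longleftrightarrow> (\<forall>h g s. gsel h g s \<in> A \<and> (\<forall>a\<in>A. g s a \<le> g s (gsel h g s)))"

definition behavior :: "real \<Rightarrow> nat set \<Rightarrow> (nat \<Rightarrow> (nat \<Rightarrow> nat \<Rightarrow> real) \<Rightarrow> nat \<Rightarrow> nat)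
      \<Rightarrow> (nat \<Rightarrow> (nat \<times> nat) list list \<Rightarrow> (nat \<Rightarrow> nat \<Rightarrow> real) \<Rightarrow> (nat \<Rightarrow> nat \<Rightarrow> real))
      \<Rightarrow> nat \<Rightarrow> (nat \<times> nat) list list \<Rightarrow> nat \<Rightarrow> nat \<Rightarrow> nat pmf" where
  "behavior \<zeta> A gsel ora H D = (\<lambda>h s. act_pmf \<zeta> A (gsel h (fitted ora H D h) s))"

primrec data_pmf :: "(nat \<Rightarrow> nat \<Rightarrow> nat \<Rightarrow> nat pmf) \<Rightarrow> nat \<Rightarrow> nat set \<Rightarrow> nat \<Rightarrow> real
      \<Rightarrow> (nat \<Rightarrow> (nat \<times> nat) list list \<Rightarrow> (nat \<Rightarrow> nat \<Rightarrow> real) \<Rightarrow> (nat \<Rightarrow> nat \<Rightarrow> real))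
      \<Rightarrow> (nat \<Rightarrow> (nat \<Rightarrow> nat \<Rightarrow> real) \<Rightarrow> nat \<Rightarrow> nat) \<Rightarrow> nat \<Rightarrow> (nat \<times> nat) list list pmf" where
  "data_pmf P s1 A H \<zeta> ora gsel 0 = return_pmf []"
| "data_pmf P s1 A H \<zeta> ora gsel (Suc t) =
     bind_pmf (data_pmf P s1 A H \<zeta> ora gsel t)
       (\<lambda>D. map_pmf (\<lambda>e. D @ [e]) (roll P (behavior \<zeta> A gsel ora H D) 1 H s1))"

definition exp_subopt :: "(nat \<Rightarrow> nat \<Rightarrow> nat \<Rightarrow> nat pmf) \<Rightarrow> (nat \<Rightarrow> nat \<Rightarrow> nat \<Rightarrow> real) \<Rightarrow> nat \<Rightarrow> nat set
      \<Rightarrow> nat \<Rightarrow> real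
      \<Rightarrow> (nat \<Rightarrow> (nat \<times> nat) list list \<Rightarrow> (nat \<Rightarrow> nat \<Rightarrow> real) \<Rightarrow> (nat \<Rightarrow> nat \<Rightarrow> real))
      \<Rightarrow> (nat \<Rightarrow> (nat \<Rightarrow> nat \<Rightarrow> real) \<Rightarrow> nat \<Rightarrow> nat)
      \<Rightarrow> ((nat \<times> nat) list list \<Rightarrow> nat \<Rightarrow> nat \<Rightarrow> nat pmf) \<Rightarrow> nat \<Rightarrow> real" where
  "exp_subopt P r s1 A H \<zeta> ora gsel pihat T =
     measure_pmf.expectation (data_pmf P s1 A H \<zeta> ora gsel T)
       (\<lambda>D. opt_value P r s1 H A - pol_value P r s1 H (pihat D))"

end

theory Submission
  imports Defs
begin

(* Two MDPs differ only at the decision step: from state 1, model v \<in> {1, 2} rewards only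
   action v - 1, every other action earning the safe reward 1/2, and from state 2 both models
   reward with the tiny probability 2^-H. The function class is closed under the Bellman backups
   of both models and of a spurious model 0 that never rewards from state 2. Once an episode
   passes through state 2 without reward, least squares therefore selects model 0, whose greedy
   action at state 1 is a safe one, and with 2^H actions the zeta-greedy rule plays one of the two
   informative actions with probability at most 2^(1-H) per episode. Hence, for T < 2^H / 8,
   with probability at least 1/4 all data is uninformative, and on such data the two models
   induce the same distribution. As the suboptimalities of any policy in the two models add up
   to at least 1/2, Le Cam's two-point argument shows that the expected ones add up to at
   least 1/8. *)

section \<open>Expectations under pmfs and rollouts\<close>

lemma integrable_measure_pmf_bounded:
  fixes f :: "'a \<Rightarrow> real"
  assumes "\<And>x. \<bar>f x\<bar> \<le> B"
  shows "integrable (measure_pmf M) f"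
  by (rule measure_pmf.integrable_const_bound[where B=B]) (use assms in auto)

lemma expectation_pmf_bounds:
  fixes f :: "'a \<Rightarrow> real"
  assumes "\<And>x. x \<in> set_pmf M \<Longrightarrow> a \<le> f x \<and> f x \<le> b"
  shows "a \<le> measure_pmf.expectation M f \<and> measure_pmf.expectation M f \<le> b"
proof -
  have "\<bar>f x\<bar> \<le> \<bar>a\<bar> + \<bar>b\<bar>" if "x \<in> set_pmf M" for x
    using assms[OF that] by arith
  then have "integrable (measure_pmf M) f"
    by (intro measure_pmf.integrable_const_bound[where B="\<bar>a\<bar> + \<bar>b\<bar>"])
       (auto simp: AE_measure_pmf_iff)
  then show ?thesis
    using assms
    by (auto intro!: measure_pmf.integral_ge_const measure_pmf.integral_le_const
             simp: AE_measure_pmf_iff)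
qed

lemma expectation_bind_pmf:
  fixes f :: "'b \<Rightarrow> real"
  assumes "\<And>x. \<bar>f x\<bar> \<le> B"
  shows "measure_pmf.expectation (bind_pmf M N) f =
         measure_pmf.expectation M (\<lambda>x. measure_pmf.expectation (N x) f)"
  unfolding measure_pmf_bind
  by (rule integral_bind[where K="count_space UNIV" and B=B and B'=1])
     (use assms in \<open>auto simp: measure_pmf.emeasure_space_1 space_subprob_algebra
                               prob_space_imp_subprob_space measure_pmf.prob_space_axioms\<close>)

lemma prob_eq_expectation_indicator:
  "measure_pmf.prob M S = measure_pmf.expectation M (indicator S)"
  by simp

lemma prob_bind_pmf:
  "measure_pmf.prob (bind_pmf M N) S = measure_pmf.expectation M (\<lambda>x. measure_pmf.prob (N x) S)"
  using expectation_bind_pmf[where B=1 and f="indicator S"] by simp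

lemma expectation_indicator_mult_cong:
  fixes f :: "'a \<Rightarrow> real"
  assumes "\<And>x. x \<in> G \<Longrightarrow> pmf M1 x = pmf M2 x"
  shows "measure_pmf.expectation M1 (\<lambda>x. indicator G x * f x) =
         measure_pmf.expectation M2 (\<lambda>x. indicator G x * f x)"
proof -
  have "measure_pmf.expectation M (\<lambda>x. indicator G x * f x) =
        integral\<^sup>L (count_space UNIV) (\<lambda>x. pmf M x *\<^sub>R (indicator G x * f x))" for M
    unfolding measure_pmf_eq_density by (subst integral_density) auto
  moreover have "(\<lambda>x. pmf M1 x *\<^sub>R (indicator G x * f x)) =
                 (\<lambda>x. pmf M2 x *\<^sub>R (indicator G x * f x))"
    using assms by (auto simp: indicator_def)
  ultimately show ?thesis by simp
qed

text \<open>Le Cam's two-point method: on G the data cannot tell M1 from M2.\<close>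
lemma two_point_lower_bound:
  fixes s1 s2 :: "'a \<Rightarrow> real"
  assumes s1: "\<And>x. 0 \<le> s1 x \<and> s1 x \<le> B" and s2: "\<And>x. 0 \<le> s2 x \<and> s2 x \<le> B"
    and sum: "\<And>x. c \<le> s1 x + s2 x"
    and agree: "\<And>x. x \<in> G \<Longrightarrow> pmf M1 x = pmf M2 x"
  shows "c * measure_pmf.prob M1 G \<le> measure_pmf.expectation M1 s1 + measure_pmf.expectation M2 s2"
proof -
  have "0 \<le> B" using s1[of undefined] by linarith
  then have int: "integrable (measure_pmf M) (\<lambda>x. indicator G x * s x)"
      "integrable (measure_pmf M) s"
    if "\<And>x. 0 \<le> s x \<and> s x \<le> B" for M and s :: "'a \<Rightarrow> real"
    using that
    by (auto intro!: integrable_measure_pmf_bounded[where B=B] simp: indicator_def abs_le_iff)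
  have "c * measure_pmf.prob M1 G = measure_pmf.expectation M1 (\<lambda>x. indicator G x * c)"
    by simp
  also have "\<dots> \<le> measure_pmf.expectation M1 (\<lambda>x. indicator G x * s1 x + indicator G x * s2 x)"
  proof (rule integral_mono)
    show "integrable (measure_pmf M1) (\<lambda>x. indicator G x * c)"
      by (rule integrable_measure_pmf_bounded[where B="\<bar>c\<bar>"]) (simp add: indicator_def)
    show "integrable (measure_pmf M1) (\<lambda>x. indicator G x * s1 x + indicator G x * s2 x)"
      by (intro Bochner_Integration.integrable_add int s1 s2)
  qed (use sum in \<open>auto simp: indicator_def\<close>)
  also have "\<dots> = measure_pmf.expectation M1 (\<lambda>x. indicator G x * s1 x) +
                  measure_pmf.expectation M2 (\<lambda>x. indicator G x * s2 x)"
    using Bochner_Integration.integral_add[OF int(1)[OF s1] int(1)[OF s2]]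
          expectation_indicator_mult_cong[OF agree, where f=s2] by simp
  also have "\<dots> \<le> measure_pmf.expectation M1 s1 + measure_pmf.expectation M2 s2"
    using s1 s2
    by (intro add_mono integral_mono int(1)[OF s1] int(2)[OF s1] int(1)[OF s2] int(2)[OF s2])
       (auto simp: indicator_def)
  finally show ?thesis .
qed

lemma length_roll: "e \<in> set_pmf (roll P pol h k s) \<Longrightarrow> length e = k"
  by (induction k arbitrary: h s e) auto

lemma roll_first_state: "e \<in> set_pmf (roll P pol h (Suc k) s) \<Longrightarrow> fst (e ! 0) = s"
  by auto

lemma expectation_roll_Suc:
  fixes f :: "(nat \<times> nat) list \<Rightarrow> real"
  assumes "\<And>e. \<bar>f e\<bar> \<le> B"
  shows "measure_pmf.expectation (roll P pol h (Suc k) s) f =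
    measure_pmf.expectation (pol h s) (\<lambda>a. measure_pmf.expectation (P h s a)
      (\<lambda>s'. measure_pmf.expectation (roll P pol (Suc h) k s') (\<lambda>rest. f ((s, a) # rest))))"
  by (simp add: expectation_bind_pmf[where B=B, OF assms])

lemma expectation_roll_first_transition:
  fixes \<Psi> :: "nat \<times> nat \<Rightarrow> nat \<Rightarrow> real"
  assumes "\<And>p s'. \<bar>\<Psi> p s'\<bar> \<le> B"
  shows "measure_pmf.expectation (roll P pol h (Suc (Suc k)) s) (\<lambda>e. \<Psi> (e ! 0) (fst (e ! 1))) =
         measure_pmf.expectation (pol h s) (\<lambda>a. measure_pmf.expectation (P h s a) (\<Psi> (s, a)))"
proof -
  have "measure_pmf.expectation (roll P pol (Suc h) (Suc k) s') (\<lambda>rest. \<Psi> (s, a) (fst (rest ! 0)))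
          = \<Psi> (s, a) s'" for a s'
    by (subst integral_cong_AE[where g="\<lambda>_. \<Psi> (s, a) s'"])
       (auto simp: AE_measure_pmf_iff roll_first_state simp del: roll.simps)
  then show ?thesis
    using expectation_roll_Suc[where B=B and f="\<lambda>e. \<Psi> (e ! 0) (fst (e ! 1))"] assms
    by (simp del: roll.simps)
qed

lemma pmf_map_pmf_Cons:
  "pmf (map_pmf ((#) x) M) e = (case e of [] \<Rightarrow> 0 | y # r \<Rightarrow> if y = x then pmf M r else 0)"
proof (cases e)
  case (Cons y r)
  have "pmf (map_pmf ((#) x) M) (x # r) = pmf M r"
    by (rule pmf_map_inj') (auto simp: inj_def)
  then show ?thesis
    using Cons by (auto simp: pmf_eq_0_set_pmf)
qed (auto simp: pmf_eq_0_set_pmf)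

lemma pmf_roll_cong:
  assumes "\<And>i. i < length e \<Longrightarrow>
             P1 (h + i) (fst (e ! i)) (snd (e ! i)) = P2 (h + i) (fst (e ! i)) (snd (e ! i))"
  shows "pmf (roll P1 pol h k s) e = pmf (roll P2 pol h k s) e"
  using assms
proof (induction k arbitrary: h s e)
  case (Suc k)
  show ?case
  proof (cases e)
    case (Cons y r)
    obtain s0 a0 where y: "y = (s0, a0)" by force
    have P0: "P1 h s0 a0 = P2 h s0 a0"
      using Suc.prems[of 0] Cons y by simp
    have IH: "pmf (roll P1 pol (Suc h) k s') r = pmf (roll P2 pol (Suc h) k s') r" for s'
      by (rule Suc.IH) (use Suc.prems[of "Suc _"] Cons in auto)
    have "pmf (bind_pmf (P1 h s a) (\<lambda>s'. map_pmf ((#) (s, a)) (roll P1 pol (Suc h) k s'))) e =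
          pmf (bind_pmf (P2 h s a) (\<lambda>s'. map_pmf ((#) (s, a)) (roll P2 pol (Suc h) k s'))) e" for a
      using Cons y P0 IH by (cases "(s, a) = (s0, a0)") (auto simp: pmf_bind pmf_map_pmf_Cons)
    then show ?thesis
      by (simp add: pmf_bind)
  qed (simp add: pmf_bind pmf_map_pmf_Cons)
qed simp

lemma pmf_bind_snoc:
  "pmf (bind_pmf M (\<lambda>D. map_pmf (\<lambda>e. D @ [e]) (R D))) (D0 @ [e0]) = pmf M D0 * pmf (R D0) e0"
proof -
  have "pmf (map_pmf (\<lambda>e. D @ [e]) (R D)) (D0 @ [e0]) = indicator {D0} D * pmf (R D0) e0" for D
  proof (cases "D = D0")
    case True
    have "pmf (map_pmf (\<lambda>e. D @ [e]) (R D)) (D @ [e0]) = pmf (R D) e0"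
      by (rule pmf_map_inj') (auto simp: inj_def)
    then show ?thesis
      using True by simp
  qed (auto simp: pmf_eq_0_set_pmf)
  then show ?thesis
    by (simp add: pmf_bind measure_pmf_single)
qed

lemma pmf_data_pmf_cong:
  assumes "\<And>pol e. e \<in> E \<Longrightarrow> pmf (roll P1 pol 1 H s1) e = pmf (roll P2 pol 1 H s1) e"
    and "set D \<subseteq> E"
  shows "pmf (data_pmf P1 s1 A H \<zeta> ora gsel t) D = pmf (data_pmf P2 s1 A H \<zeta> ora gsel t) D"
  using assms(2)
proof (induction t arbitrary: D)
  case (Suc t)
  show ?case
  proof (cases D rule: rev_cases)
    case Nil
    have "pmf (data_pmf P s1 A H \<zeta> ora gsel (Suc t)) [] = 0" for P
      by (auto simp: pmf_eq_0_set_pmf)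
    then show ?thesis
      using Nil by simp
  next
    case (snoc D' e)
    then show ?thesis
      using Suc assms(1) by (simp only: data_pmf.simps pmf_bind_snoc) simp
  qed
qed simp

lemma prob_data_pmf_Suc:
  "measure_pmf.prob (data_pmf P s1 A H \<zeta> ora gsel (Suc t)) S =
    measure_pmf.expectation (data_pmf P s1 A H \<zeta> ora gsel t)
      (\<lambda>D. measure_pmf.prob (roll P (behavior \<zeta> A gsel ora H D) 1 H s1) {e. D @ [e] \<in> S})"
  by (simp add: prob_bind_pmf vimage_def)

section \<open>Values, fitted Q-functions and low rank\<close>

lemma ep_return_bounds:
  assumes "\<And>h s a. 0 \<le> r h s a \<and> r h s a \<le> 1"
  shows "0 \<le> ep_return r e \<and> ep_return r e \<le> real (length e)"
proof -
  have "ep_return r e \<le> (\<Sum>i<length e. 1)"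
    unfolding ep_return_def by (intro sum_mono) (use assms in auto)
  moreover have "0 \<le> ep_return r e"
    unfolding ep_return_def by (intro sum_nonneg) (use assms in auto)
  ultimately show ?thesis by simp
qed

lemma pol_value_bounds:
  assumes "\<And>h s a. 0 \<le> r h s a \<and> r h s a \<le> 1"
  shows "0 \<le> pol_value P r s1 H pol \<and> pol_value P r s1 H pol \<le> real H"
  unfolding pol_value_def
  by (rule expectation_pmf_bounds) (use ep_return_bounds[OF assms] length_roll in fastforce)

lemma
  assumes r: "\<And>h s a. 0 \<le> r h s a \<and> r h s a \<le> 1"
  shows pol_value_le_opt_value:
      "\<forall>h s. set_pmf (pol h s) \<subseteq> A \<Longrightarrow> pol_value P r s1 H pol \<le> opt_value P r s1 H A"
    and opt_value_le: "A \<noteq> {} \<Longrightarrow> opt_value P r s1 H A \<le> real H"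
proof -
  let ?V = "\<lambda>pol. pol_value P r s1 H pol"
  have V_le: "?V pol' \<le> real H" for pol'
    using pol_value_bounds[of r P s1 H pol'] r by blast
  then have bdd: "bdd_above (?V ` {pol. \<forall>h s. set_pmf (pol h s) \<subseteq> A})"
    by (intro bdd_aboveI[where M="real H"]) fastforce
  show "\<forall>h s. set_pmf (pol h s) \<subseteq> A \<Longrightarrow> ?V pol \<le> opt_value P r s1 H A"
    unfolding opt_value_def by (rule cSUP_upper[OF _ bdd]) simp
  assume "A \<noteq> {}"
  then obtain a where "a \<in> A" by blast
  then have "(\<lambda>h s. return_pmf a) \<in> {pol :: nat \<Rightarrow> nat \<Rightarrow> nat pmf. \<forall>h s. set_pmf (pol h s) \<subseteq> A}"
    by simp
  then have "{pol :: nat \<Rightarrow> nat \<Rightarrow> nat pmf. \<forall>h s. set_pmf (pol h s) \<subseteq> A} \<noteq> {}"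
    by (metis empty_iff)
  then show "opt_value P r s1 H A \<le> real H"
    unfolding opt_value_def by (rule cSUP_least) (rule V_le)
qed

lemma fitted_Suc: "h < H \<Longrightarrow> fitted ora H D h = ora h D (fitted ora H D (Suc h))"
proof -
  assume "h < H"
  then have "H - h = Suc (H - Suc h)" "H - Suc (H - Suc h) = h" by auto
  then show ?thesis
    unfolding fitted_def by simp
qed

lemma fitted_in_class:
  assumes "is_reg_oracle r A H Fc ora" "1 \<le> h" "h \<le> H"
  shows "fitted ora H D h \<in> Fc h"
  using assms(2,3)
proof (induction "H - h" arbitrary: h)
  case 0
  then show ?case
    using assms(1) by (auto simp: is_reg_oracle_def fitted_def)
next
  case (Suc m)
  then show ?case
    using assms(1) by (auto simp: fitted_Suc is_reg_oracle_def)
qed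

text \<open>The features are the one-hot encodings of the labels, the measures the d kernels.\<close>
lemma low_rank_of_labelling:
  fixes label :: "nat \<Rightarrow> nat \<Rightarrow> nat" and K :: "nat \<Rightarrow> nat \<Rightarrow> nat pmf"
  assumes label: "\<And>s a. label s a < d" and P: "\<And>h s a. P h s a = K h (label s a)"
  shows "low_rank P A H"
proof -
  let ?\<phi> = "\<lambda>s a i. if i = label s a then 1 else 0 :: real"
  have abs_pmf: "(\<Sum>s'. \<bar>pmf p s'\<bar>) = 1" "summable (\<lambda>s'. \<bar>pmf p s'\<bar>)" for p :: "nat pmf"
    using sums_integral_count_space_nat[OF integrable_pmf[of UNIV p]]
    by (simp_all add: integral_pmf sums_iff)
  have "(?\<phi> s a i)\<^sup>2 = ?\<phi> s a i" for s a i
    by simp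
  then have "(\<Sum>i<d. (?\<phi> s a i)\<^sup>2) = 1" for s a
    using label[of s a] by simp
  moreover have "pmf (P h s a) s' = (\<Sum>i<d. ?\<phi> s a i * pmf (K h i) s')" for h s a s'
  proof -
    have "(\<Sum>i<d. ?\<phi> s a i * pmf (K h i) s') = (\<Sum>i<d. if i = label s a then pmf (K h i) s' else 0)"
      by (rule sum.cong) auto
    then show ?thesis
      using label[of s a] P by simp
  qed
  ultimately have "low_rank_dim P A H d"
    unfolding low_rank_dim_def using abs_pmf
    by (intro exI[of _ ?\<phi>] exI[of _ "\<lambda>h s' i. pmf (K h i) s'"]) simp
  then show ?thesis
    unfolding low_rank_def ..
qed

lemma bellman_op_zero:
  "finite A \<Longrightarrow> A \<noteq> {} \<Longrightarrow> bellman_op P r A h (\<lambda>_ _. 0) = r h"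
  by (simp add: bellman_op_def image_constant_conv fun_eq_iff)

lemma bellman_op_bounds:
  assumes A: "finite A" "A \<noteq> {}" and r: "0 \<le> r h s a" "r h s a \<le> 1"
    and g: "\<And>s a. a \<in> A \<Longrightarrow> 0 \<le> g s a \<and> g s a \<le> B"
  shows "0 \<le> bellman_op P r A h g s a \<and> bellman_op P r A h g s a \<le> B + 1"
proof -
  have "0 \<le> Max ((\<lambda>a'. g s' a') ` A) \<and> Max ((\<lambda>a'. g s' a') ` A) \<le> B" for s'
  proof -
    obtain a0 where a0: "a0 \<in> A" using A by auto
    have "g s' a0 \<le> Max ((\<lambda>a'. g s' a') ` A)"
      using A a0 by (intro Max_ge) auto
    moreover have "Max ((\<lambda>a'. g s' a') ` A) \<in> (\<lambda>a'. g s' a') ` A"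
      using A by (intro Max_in) auto
    ultimately show ?thesis
      using g a0 by fastforce
  qed
  then show ?thesis
    using expectation_pmf_bounds[of "P h s a" 0 "\<lambda>s'. Max ((\<lambda>a'. g s' a') ` A)" B] r
    by (auto simp: bellman_op_def)
qed

lemma prob_act_pmf_notin:
  assumes A: "finite A" "A \<noteq> {}" and B: "B \<subseteq> A" "a0 \<notin> B" and \<zeta>: "0 \<le> \<zeta>" "\<zeta> \<le> 1"
  shows "1 - card B / card A \<le> measure_pmf.prob (act_pmf \<zeta> A a0) (- B)"
proof -
  have "card (A \<inter> - B) = card A - card B"
    using A B by (simp add: Diff_eq[symmetric] card_Diff_subset finite_subset)
  then have uniform: "measure_pmf.prob (pmf_of_set A) (- B) = 1 - card B / card A"
    using A B card_mono[OF A(1) B(1)] by (simp add: measure_pmf_of_set of_nat_diff field_simps)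
  have "measure_pmf.prob (act_pmf \<zeta> A a0) (- B) = \<zeta> * (1 - card B / card A) + (1 - \<zeta>)"
    using \<zeta> B uniform by (simp add: act_pmf_def prob_bind_pmf)
  moreover have "\<zeta> * (card B / card A) \<le> card B / card A"
    using \<zeta> by (intro mult_left_le_one_le) auto
  ultimately show ?thesis
    by (simp add: algebra_simps)
qed

section \<open>The hard instance\<close>

definition terminal_reward :: "nat \<Rightarrow> real" where
  "terminal_reward s = (if s = 3 then 1 else if s = 5 then 1/2 else 0)"

text \<open>States: 0 initial, 1 and 2 the states of the decision step, then 3 (reward 1), 4 (reward 0)
  or 5 (reward 1/2). In model v \<in> {1, 2} the action v - 1 is the only optimal one at state 1, and
  every action at state 2 leads to reward with the tiny probability q. Model 0 is the spurious
  model of the function class: it never rewards at state 2.\<close>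
definition decision_kernel :: "nat \<Rightarrow> real \<Rightarrow> nat \<Rightarrow> nat \<Rightarrow> nat pmf" where
  "decision_kernel v q s a =
     (if s = 0 then pmf_of_set {1, 2}
      else if s = 1 then
        (if a = 0 then return_pmf (if v = 1 then 3 else 4)
         else if a = 1 then return_pmf (if v = 2 then 3 else 4)
         else return_pmf 5)
      else if s = 2 then
        (if v = 0 then return_pmf 4 else map_pmf (\<lambda>b. if b then 3 else 4) (bernoulli_pmf q))
      else return_pmf 4)"

text \<open>For H = 2 there is no room for the initial random step: the episode starts in state 1 and
  the decision is taken at step 1.\<close>
definition decision_step :: "nat \<Rightarrow> nat" where
  "decision_step H = (if H = 2 then 1 else 2)"

definition hard_start :: "nat \<Rightarrow> nat" where
  "hard_start H = (if H = 2 then 1 else 0)"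

definition signal_prob :: "nat \<Rightarrow> real" where
  "signal_prob H = 1 / 2 ^ H"

definition hard_mdp :: "nat \<Rightarrow> nat \<Rightarrow> nat \<Rightarrow> nat \<Rightarrow> nat \<Rightarrow> nat pmf" where
  "hard_mdp H v h = decision_kernel (if h = decision_step H then v else 0) (signal_prob H)"

definition hard_reward :: "nat \<Rightarrow> nat \<Rightarrow> nat \<Rightarrow> nat \<Rightarrow> real" where
  "hard_reward H h s a = (if h = Suc (decision_step H) then terminal_reward s else 0)"

definition hard_actions :: "nat \<Rightarrow> nat set" where
  "hard_actions H = {..<2 ^ H}"

text \<open>Closing under the backups of all three models makes the class Bellman complete for each.\<close>
primrec backup_class :: "nat \<Rightarrow> nat \<Rightarrow> (nat \<Rightarrow> nat \<Rightarrow> real) set" where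
  "backup_class H 0 = {hard_reward H H}"
| "backup_class H (Suc m) =
     (\<lambda>(v, g). bellman_op (hard_mdp H v) (hard_reward H) (hard_actions H) (H - Suc m) g)
       ` ({0, 1, 2} \<times> backup_class H m)"

definition hard_class :: "nat \<Rightarrow> nat \<Rightarrow> (nat \<Rightarrow> nat \<Rightarrow> real) set" where
  "hard_class H h = backup_class H (H - h)"

definition decision_Q :: "nat \<Rightarrow> real \<Rightarrow> nat \<Rightarrow> nat \<Rightarrow> real" where
  "decision_Q v q s a = measure_pmf.expectation (decision_kernel v q s a) terminal_reward"

lemma terminal_reward_bounds: "0 \<le> terminal_reward s" "terminal_reward s \<le> 1"
  by (auto simp: terminal_reward_def)

lemma hard_reward_bounds: "0 \<le> hard_reward H h s a \<and> hard_reward H h s a \<le> 1"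
  by (auto simp: hard_reward_def terminal_reward_bounds)

lemma finite_hard_actions: "finite (hard_actions H)"
  and hard_actions_nonempty: "hard_actions H \<noteq> {}"
  by (auto simp: hard_actions_def lessThan_empty_iff)

lemma card_hard_actions: "card (hard_actions H) = 2 ^ H"
  by (simp add: hard_actions_def)

lemma small_actions_subset_hard_actions: "2 \<le> H \<Longrightarrow> {0, 1, 2} \<subseteq> hard_actions H"
proof -
  assume "2 \<le> H"
  then have "(2::nat) ^ 2 \<le> 2 ^ H"
    by (rule power_increasing) simp
  then show ?thesis
    by (auto simp: hard_actions_def)
qed

lemma signal_prob_bounds: "0 < signal_prob H" "signal_prob H \<le> 1"
  by (auto simp: signal_prob_def)

lemma decision_Q_state1:
  "decision_Q v q 1 a =
     (if a = 0 then of_bool (v = 1) else if a = 1 then of_bool (v = 2) else 1/2)"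
  by (auto simp: decision_Q_def decision_kernel_def terminal_reward_def)

lemma decision_Q_state2: "0 \<le> q \<Longrightarrow> q \<le> 1 \<Longrightarrow> decision_Q v q 2 = (\<lambda>_. if v = 0 then 0 else q)"
  by (auto simp: decision_Q_def decision_kernel_def terminal_reward_def)

lemma low_rank_hard_mdp: "low_rank (hard_mdp H v) A H"
proof -
  define label :: "nat \<Rightarrow> nat \<Rightarrow> nat" where
    "label s a = (if s = 0 then 0 else if s = 1 then (if a = 0 then 1 else if a = 1 then 2 else 3)
                  else if s = 2 then 4 else 5)" for s a
  define rep :: "nat \<Rightarrow> nat \<times> nat" where
    "rep i = [(0, 0), (1, 0), (1, 1), (1, 2), (2, 0), (3, 0)] ! i" for i
  show ?thesis
  proof (rule low_rank_of_labelling[where d=6 and label=label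
                                    and K="\<lambda>h i. case_prod (hard_mdp H v h) (rep i)"])
    show "label s a < 6" for s a
      by (simp add: label_def)
    show "hard_mdp H v h s a = case_prod (hard_mdp H v h) (rep (label s a))" for h s a
      by (auto simp: hard_mdp_def decision_kernel_def label_def rep_def)
  qed
qed

lemma backup_class_finite: "finite (backup_class H m)"
  by (induction m) auto

lemma backup_class_bounds:
  "f \<in> backup_class H m \<Longrightarrow> a \<in> hard_actions H \<Longrightarrow> 0 \<le> f s a \<and> f s a \<le> real m + 1"
proof (induction m arbitrary: f s a)
  case 0
  then show ?case
    using hard_reward_bounds by auto
next
  case (Suc m)
  then obtain v g where "g \<in> backup_class H m"
    and f: "f = bellman_op (hard_mdp H v) (hard_reward H) (hard_actions H) (H - Suc m) g"
    by auto
  then show ?case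
    using bellman_op_bounds[OF finite_hard_actions hard_actions_nonempty,
                            where g=g and B="real m + 1"] hard_reward_bounds Suc
    by auto
qed

lemma hard_class_bounds:
  assumes "h \<in> {1..H}"
  shows "finite (hard_class H h) \<and>
    (\<forall>f\<in>hard_class H h. \<forall>s. \<forall>a\<in>hard_actions H. 0 \<le> f s a \<and> f s a \<le> real H)"
proof -
  have "0 \<le> f s a \<and> f s a \<le> real H" if "f \<in> hard_class H h" "a \<in> hard_actions H" for f s a
  proof -
    have "0 \<le> f s a \<and> f s a \<le> real (H - h) + 1"
      using backup_class_bounds that unfolding hard_class_def by blast
    moreover have "real (H - h) + 1 \<le> real H"
      using assms by auto
    ultimately show ?thesis
      by linarith
  qed
  then show ?thesis
    by (simp add: hard_class_def backup_class_finite)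
qed

lemma hard_class_top: "hard_class H H = {hard_reward H H}"
  by (simp add: hard_class_def)

lemma hard_class_Suc:
  assumes "h < H"
  shows "hard_class H h =
    (\<lambda>(v, g). bellman_op (hard_mdp H v) (hard_reward H) (hard_actions H) h g)
      ` ({0, 1, 2} \<times> hard_class H (Suc h))"
proof -
  have "H - h = Suc (H - Suc h)" "H - Suc (H - Suc h) = h"
    using assms by auto
  then show ?thesis
    unfolding hard_class_def by (simp only: backup_class.simps)
qed

lemma bellman_complete_hard_mdp:
  assumes "v \<in> {0, 1, 2}"
  shows "bellman_complete (hard_mdp H v) (hard_reward H) (hard_actions H) H (hard_class H)"
  unfolding bellman_complete_def
proof (intro conjI ballI)
  fix h g
  assume "h \<in> {1..<H}" and "g \<in> hard_class H (Suc h)"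
  then have "bellman_op (hard_mdp H v) (hard_reward H) (hard_actions H) h g \<in> hard_class H h"
    using assms hard_class_Suc[of h H] by auto
  then show "\<exists>f\<in>hard_class H h. \<forall>s. \<forall>a\<in>hard_actions H.
      f s a = bellman_op (hard_mdp H v) (hard_reward H) (hard_actions H) h g s a"
    by blast
qed (simp add: hard_class_top bellman_op_zero[OF finite_hard_actions hard_actions_nonempty])

lemma hard_reward_off: "h \<noteq> Suc (decision_step H) \<Longrightarrow> hard_reward H h = (\<lambda>_ _. 0)"
  by (simp add: hard_reward_def fun_eq_iff)

lemma hard_class_after_reward:
  assumes "3 \<le> H" "4 \<le> h" "h \<le> H"
  shows "hard_class H h = {\<lambda>_ _. 0}"
  using assms(2,3)
proof (induction "H - h" arbitrary: h)
  case 0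
  then show ?case
    using assms(1) by (simp add: hard_class_top hard_reward_off decision_step_def)
next
  case (Suc m)
  then have "hard_class H (Suc h) = {\<lambda>_ _. 0}"
    by simp
  then show ?case
    using Suc.prems assms(1) Suc.hyps(2)
    by (simp add: hard_class_Suc bellman_op_zero finite_hard_actions hard_actions_nonempty
                  hard_reward_off decision_step_def)
qed

lemma hard_class_reward_step:
  assumes "3 \<le> H"
  shows "hard_class H 3 = {\<lambda>s a. terminal_reward s}"
proof (cases "H = 3")
  case False
  then have "hard_class H 4 = {\<lambda>_ _. 0}"
    using assms by (intro hard_class_after_reward) auto
  then show ?thesis
    using assms False
    by (simp add: hard_class_Suc[of 3] bellman_op_zero finite_hard_actions hard_actions_nonempty
                  hard_reward_def decision_step_def)
qed (simp add: hard_class_top hard_reward_def decision_step_def fun_eq_iff)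

lemma bellman_op_terminal_reward:
  "3 \<le> H \<Longrightarrow> bellman_op (hard_mdp H v) (hard_reward H) (hard_actions H) 2 (\<lambda>s a. terminal_reward s)
     = decision_Q v (signal_prob H)"
  using finite_hard_actions hard_actions_nonempty
  by (simp add: bellman_op_def hard_reward_def hard_mdp_def decision_step_def decision_Q_def
                image_constant_conv fun_eq_iff)

lemma hard_class_decision_step:
  "3 \<le> H \<Longrightarrow> hard_class H 2 = (\<lambda>v. decision_Q v (signal_prob H)) ` {0, 1, 2}"
  by (simp add: hard_class_Suc[of 2] hard_class_reward_step bellman_op_terminal_reward)

section \<open>Values of the hard instance\<close>

lemma decision_Q_bounds: "0 \<le> decision_Q v q s a \<and> decision_Q v q s a \<le> 1"
  unfolding decision_Q_def by (rule expectation_pmf_bounds) (simp add: terminal_reward_bounds)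

lemma ep_return_hard_reward:
  assumes "length e = H" "2 \<le> H"
  shows "ep_return (hard_reward H) e = terminal_reward (fst (e ! decision_step H))"
proof -
  have "ep_return (hard_reward H) e =
        (\<Sum>i<H. if i = decision_step H then terminal_reward (fst (e ! i)) else 0)"
    unfolding ep_return_def assms(1) by (intro sum.cong) (auto simp: hard_reward_def)
  also have "\<dots> = terminal_reward (fst (e ! decision_step H))"
    using assms(2) by (simp add: decision_step_def)
  finally show ?thesis .
qed

lemma expectation_hard_roll:
  fixes \<Phi> :: "nat \<Rightarrow> nat \<Rightarrow> nat \<Rightarrow> real"
  assumes \<Phi>: "\<And>x y z. \<bar>\<Phi> x y z\<bar> \<le> B" and H: "3 \<le> H"
  shows "measure_pmf.expectation (roll (hard_mdp H v) pol 1 H 0)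
           (\<lambda>e. \<Phi> (fst (e ! 1)) (snd (e ! 1)) (fst (e ! 2))) =
    (measure_pmf.expectation (pol 2 1)
       (\<lambda>a. measure_pmf.expectation (decision_kernel v (signal_prob H) 1 a) (\<Phi> 1 a)) +
     measure_pmf.expectation (pol 2 2)
       (\<lambda>a. measure_pmf.expectation (decision_kernel v (signal_prob H) 2 a) (\<Phi> 2 a))) / 2"
proof -
  let ?X = "\<lambda>s. measure_pmf.expectation (pol 2 s)
              (\<lambda>a. measure_pmf.expectation (decision_kernel v (signal_prob H) s a) (\<Phi> s a))"
  define k where "k = H - 3"
  have k: "H = Suc (Suc (Suc k))"
    using H by (simp add: k_def)
  have "measure_pmf.expectation (roll (hard_mdp H v) pol 2 (Suc (Suc k)) s)
          (\<lambda>rest. \<Phi> (fst (rest ! 0)) (snd (rest ! 0)) (fst (rest ! 1))) = ?X s" for s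
    using expectation_roll_first_transition[where \<Psi>="\<lambda>p. \<Phi> (fst p) (snd p)" and B=B, OF \<Phi>]
      H by (simp add: hard_mdp_def decision_step_def del: roll.simps)
  moreover have "hard_mdp H v 1 0 a = pmf_of_set {1, 2}" for a
    using H by (simp add: hard_mdp_def decision_step_def decision_kernel_def)
  ultimately show ?thesis
    using expectation_roll_Suc[where B=B and P="hard_mdp H v" and pol=pol and h=1
            and k="Suc (Suc k)" and s=0
            and f="\<lambda>e. \<Phi> (fst (e ! 1)) (snd (e ! 1)) (fst (e ! 2))"] \<Phi>
    by (simp add: k integral_pmf_of_set numeral_2_eq_2 del: roll.simps)
qed

definition hard_value :: "nat \<Rightarrow> nat \<Rightarrow> (nat \<Rightarrow> nat \<Rightarrow> nat pmf) \<Rightarrow> real" where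
  "hard_value H v pol = pol_value (hard_mdp H v) (hard_reward H) (hard_start H) H pol"

definition hard_opt :: "nat \<Rightarrow> nat \<Rightarrow> real" where
  "hard_opt H v = opt_value (hard_mdp H v) (hard_reward H) (hard_start H) H (hard_actions H)"

lemma hard_value_horizon_ge3:
  assumes "3 \<le> H"
  shows "hard_value H v pol =
    (measure_pmf.expectation (pol 2 1) (decision_Q v (signal_prob H) 1) +
     measure_pmf.expectation (pol 2 2) (decision_Q v (signal_prob H) 2)) / 2"
proof -
  have "hard_value H v pol = measure_pmf.expectation (roll (hard_mdp H v) pol 1 H 0)
          (\<lambda>e. (\<lambda>x y z. terminal_reward z) (fst (e ! 1)) (snd (e ! 1)) (fst (e ! 2)))"
    unfolding hard_value_def pol_value_def using assms
    by (simp add: hard_start_def, intro integral_cong_AE)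
       (auto simp: AE_measure_pmf_iff ep_return_hard_reward length_roll decision_step_def)
  also have "\<dots> = (measure_pmf.expectation (pol 2 1) (decision_Q v (signal_prob H) 1) +
                   measure_pmf.expectation (pol 2 2) (decision_Q v (signal_prob H) 2)) / 2"
    using terminal_reward_bounds
    by (subst expectation_hard_roll[where B=1 and v=v, OF _ assms])
       (simp_all add: decision_Q_def[abs_def])
  finally show ?thesis .
qed

lemma hard_value_horizon_2:
  "hard_value 2 v pol = measure_pmf.expectation (pol 1 1) (decision_Q v (signal_prob 2) 1)"
proof -
  have "hard_value 2 v pol = measure_pmf.expectation (roll (hard_mdp 2 v) pol 1 (Suc (Suc 0)) 1)
          (\<lambda>e. (\<lambda>p s. terminal_reward s) (e ! 0) (fst (e ! 1)))"
    unfolding hard_value_def pol_value_def hard_start_def numeral_2_eq_2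
    by (simp del: roll.simps, intro integral_cong_AE)
       (auto simp: AE_measure_pmf_iff ep_return_hard_reward length_roll decision_step_def
             simp del: roll.simps)
  also have "\<dots> = measure_pmf.expectation (pol 1 1) (decision_Q v (signal_prob 2) 1)"
    using terminal_reward_bounds
    by (subst expectation_roll_first_transition[where B=1])
       (simp_all add: decision_Q_def[abs_def] hard_mdp_def decision_step_def)
  finally show ?thesis .
qed

lemma hard_value_sum:
  assumes "2 \<le> H"
  shows "hard_value H 1 pol + hard_value H 2 pol = (if H = 2 then 1 else 1/2 + signal_prob H)"
proof -
  have int: "integrable (measure_pmf M) (decision_Q v q s)" for M v q s
    by (rule integrable_measure_pmf_bounded[where B=1]) (use decision_Q_bounds in auto)
  have "measure_pmf.expectation M (decision_Q 1 q 1) +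
        measure_pmf.expectation M (decision_Q 2 q 1) = 1" for M q
  proof -
    have "decision_Q 1 q 1 a + decision_Q 2 q 1 a = 1" for a
      using decision_Q_state1[of 1 q a] decision_Q_state1[of 2 q a] by simp
    then show ?thesis
      using Bochner_Integration.integral_add[OF int int, of M 1 q 1 2 q 1] by simp
  qed
  then show ?thesis
    using assms signal_prob_bounds[of H]
    by (auto simp: hard_value_horizon_ge3 hard_value_horizon_2 decision_Q_state2 add_divide_distrib)
qed

lemma hard_value_correct_guess:
  assumes "2 \<le> H" "v \<in> {1, 2}"
  shows "hard_value H v (\<lambda>h s. return_pmf (v - 1)) = (if H = 2 then 1 else (1 + signal_prob H) / 2)"
proof -
  from assms(2) consider "v = 1" | "v = 2"
    by blast
  then show ?thesis
    using assms(1) signal_prob_bounds[of H]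
    by cases (simp_all add: hard_value_horizon_ge3 hard_value_horizon_2 decision_Q_def
                            decision_kernel_def terminal_reward_def)
qed

lemma hard_subopt_bounds:
  assumes "\<forall>h s. set_pmf (pol h s) \<subseteq> hard_actions H"
  shows "0 \<le> hard_opt H v - hard_value H v pol \<and> hard_opt H v - hard_value H v pol \<le> real H"
  using pol_value_le_opt_value[where r="hard_reward H", OF hard_reward_bounds assms]
    pol_value_bounds[where r="hard_reward H", OF hard_reward_bounds]
    opt_value_le[where r="hard_reward H", OF hard_reward_bounds hard_actions_nonempty]
  unfolding hard_opt_def hard_value_def by (smt (verit))

lemma hard_subopt_sum:
  assumes "2 \<le> H"
  shows "1/2 \<le> (hard_opt H 1 - hard_value H 1 pol) + (hard_opt H 2 - hard_value H 2 pol)"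
proof -
  have opt: "hard_value H v (\<lambda>h s. return_pmf (v - 1)) \<le> hard_opt H v" if "v \<in> {1, 2}" for v
    unfolding hard_opt_def hard_value_def
    using that small_actions_subset_hard_actions[OF assms]
    by (intro pol_value_le_opt_value[where r="hard_reward H", OF hard_reward_bounds]) auto
  show ?thesis
    using opt[of 1] opt[of 2] hard_value_correct_guess[OF assms, of 1]
      hard_value_correct_guess[OF assms, of 2] hard_value_sum[OF assms, of pol]
      signal_prob_bounds[of H]
    by (cases "H = 2") auto
qed

section \<open>Regression is misled by uninformative data\<close>

text \<open>Entry i of an episode is the pair visited at step i + 1, so the conditions concern the
  decision step 2 and the state reached from it.\<close>
definition uninformative :: "(nat \<times> nat) list \<Rightarrow> bool" where
  "uninformative e \<longleftrightarrow>
     (fst (e ! 1) = 1 \<and> snd (e ! 1) \<notin> {0, 1}) \<or> (fst (e ! 1) = 2 \<and> fst (e ! 2) = 4)"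

definition uninformative_data :: "(nat \<times> nat) list list set" where
  "uninformative_data = {D. \<forall>e\<in>set D. uninformative e}"

definition misleading_data :: "(nat \<times> nat) list list set" where
  "misleading_data = {D \<in> uninformative_data. D \<noteq> [] \<and> fst (hd D ! 1) = 2}"

lemma pmf_data_hard_mdp_eq:
  assumes "3 \<le> H" "D \<in> uninformative_data"
  shows "pmf (data_pmf (hard_mdp H 1) 0 A H \<zeta> ora gsel t) D =
         pmf (data_pmf (hard_mdp H 2) 0 A H \<zeta> ora gsel t) D"
proof (rule pmf_data_pmf_cong[where E="Collect uninformative"])
  show "set D \<subseteq> Collect uninformative"
    using assms(2) by (auto simp: uninformative_data_def)
  fix pol e
  assume "e \<in> Collect uninformative"
  then show "pmf (roll (hard_mdp H 1) pol 1 H 0) e = pmf (roll (hard_mdp H 2) pol 1 H 0) e"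
    using assms(1)
    by (intro pmf_roll_cong)
       (auto simp: uninformative_def hard_mdp_def decision_step_def decision_kernel_def)
qed

lemma uninformative_sq_error:
  assumes "uninformative e" "v \<noteq> 0" "0 < q" "q \<le> 1"
  defines "err w \<equiv> (decision_Q w q (fst (e ! 1)) (snd (e ! 1)) - terminal_reward (fst (e ! 2)))\<^sup>2"
  shows "err 0 \<le> err v" and "fst (e ! 1) = 2 \<Longrightarrow> err 0 < err v"
  using assms
  by (auto simp: err_def uninformative_def decision_Q_def decision_kernel_def terminal_reward_def)

lemma sq_loss_decision_step:
  assumes "3 \<le> H"
  shows "sq_loss (hard_reward H) (hard_actions H) 2 (decision_Q v q) (\<lambda>s a. terminal_reward s) D =
    (\<Sum>e\<leftarrow>D. (decision_Q v q (fst (e ! 1)) (snd (e ! 1)) - terminal_reward (fst (e ! 2)))\<^sup>2)"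
  using assms finite_hard_actions hard_actions_nonempty
  by (simp add: sq_loss_def hard_reward_def decision_step_def image_constant_conv)

lemma fitted_misleading_data:
  assumes H: "3 \<le> H" and ora: "is_reg_oracle (hard_reward H) (hard_actions H) H (hard_class H) ora"
    and D: "D \<in> misleading_data"
  shows "fitted ora H D 2 = decision_Q 0 (signal_prob H)"
proof -
  let ?q = "signal_prob H"
  let ?loss = "\<lambda>f. sq_loss (hard_reward H) (hard_actions H) 2 f (\<lambda>s a. terminal_reward s) D"
  have "fitted ora H D 3 \<in> hard_class H 3"
    using H by (intro fitted_in_class[OF ora]) auto
  then have "fitted ora H D 3 = (\<lambda>s a. terminal_reward s)"
    using hard_class_reward_step[OF H] by simp
  then have fit: "fitted ora H D 2 = ora 2 D (\<lambda>s a. terminal_reward s)"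
    using H fitted_Suc[of 2 H ora D] by simp
  have "ora 2 D (\<lambda>s a. terminal_reward s) \<in> hard_class H 2"
    and min: "\<And>f. f \<in> hard_class H 2 \<Longrightarrow> ?loss (ora 2 D (\<lambda>s a. terminal_reward s)) \<le> ?loss f"
    using ora H unfolding is_reg_oracle_def by auto
  then obtain v where ora_v: "ora 2 D (\<lambda>s a. terminal_reward s) = decision_Q v ?q"
    using hard_class_decision_step[OF H] by auto
  have "v = 0"
  proof (rule ccontr)
    assume "v \<noteq> 0"
    let ?err = "\<lambda>w e.
      (decision_Q w ?q (fst (e ! 1)) (snd (e ! 1)) - terminal_reward (fst (e ! 2)))\<^sup>2"
    obtain e D' where D': "D = e # D'" and e: "uninformative e" "fst (e ! 1) = 2"
      and D'_unif: "\<forall>e'\<in>set D'. uninformative e'"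
      using D by (cases D) (auto simp: misleading_data_def uninformative_data_def)
    have "?err 0 e < ?err v e"
      using uninformative_sq_error(2)[OF e(1) \<open>v \<noteq> 0\<close> signal_prob_bounds e(2)] .
    moreover have "(\<Sum>e'\<leftarrow>D'. ?err 0 e') \<le> (\<Sum>e'\<leftarrow>D'. ?err v e')"
      using uninformative_sq_error(1)[OF _ \<open>v \<noteq> 0\<close> signal_prob_bounds] D'_unif
      by (intro sum_list_mono) auto
    ultimately have "?loss (decision_Q 0 ?q) < ?loss (decision_Q v ?q)"
      unfolding sq_loss_decision_step[OF H] D' by (simp add: add_less_le_mono)
    moreover have "?loss (decision_Q v ?q) \<le> ?loss (decision_Q 0 ?q)"
      using min[of "decision_Q 0 ?q"] ora_v hard_class_decision_step[OF H] by simp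
    ultimately show False
      by simp
  qed
  then show ?thesis
    using fit ora_v by simp
qed

lemma greedy_avoids_guessing:
  assumes "is_greedy_sel A gsel" "2 \<in> A"
  shows "gsel h (decision_Q 0 q) 1 \<notin> {0, 1}"
proof -
  have "decision_Q 0 q 1 2 \<le> decision_Q 0 q 1 (gsel h (decision_Q 0 q) 1)"
    using assms unfolding is_greedy_sel_def by blast
  then show ?thesis
    by (auto simp: decision_Q_def decision_kernel_def terminal_reward_def split: if_splits)
qed

lemma prob_uninformative_episode:
  assumes H: "3 \<le> H" and \<zeta>: "0 \<le> \<zeta>" "\<zeta> \<le> 1" and a0: "a0 \<notin> {0, 1}"
    and pol: "pol 2 1 = act_pmf \<zeta> (hard_actions H) a0"
  shows "1 - 3 / (2 * 2 ^ H) \<le>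
    measure_pmf.prob (roll (hard_mdp H 1) pol 1 H 0) {e. uninformative e}"
proof -
  let ?q = "signal_prob H"
  let ?\<Phi> = "\<lambda>(x::nat) (y::nat) (z::nat). of_bool ((x = 1 \<and> y \<notin> {0, 1}) \<or> (x = 2 \<and> z = 4)) :: real"
  have "indicator {e. uninformative e} = (\<lambda>e. ?\<Phi> (fst (e ! 1)) (snd (e ! 1)) (fst (e ! 2)))"
    by (auto simp: uninformative_def indicator_def)
  then have "measure_pmf.prob (roll (hard_mdp H 1) pol 1 H 0) {e. uninformative e} =
        measure_pmf.expectation (roll (hard_mdp H 1) pol 1 H 0)
          (\<lambda>e. ?\<Phi> (fst (e ! 1)) (snd (e ! 1)) (fst (e ! 2)))"
    by (simp only: prob_eq_expectation_indicator)
  also have "\<dots> = (measure_pmf.expectation (pol 2 1)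
          (\<lambda>a. measure_pmf.expectation (decision_kernel 1 ?q 1 a) (?\<Phi> 1 a)) +
        measure_pmf.expectation (pol 2 2)
          (\<lambda>a. measure_pmf.expectation (decision_kernel 1 ?q 2 a) (?\<Phi> 2 a))) / 2"
    by (rule expectation_hard_roll[where B=1, OF _ H]) simp
  also have "\<dots> = (measure_pmf.prob (act_pmf \<zeta> (hard_actions H) a0) (- {0, 1}) + (1 - ?q)) / 2"
  proof -
    have "(\<lambda>a. measure_pmf.expectation (decision_kernel 1 ?q 1 a) (?\<Phi> 1 a)) = indicator (- {0, 1})"
      by (auto simp: decision_kernel_def indicator_def)
    moreover have "(\<lambda>a. measure_pmf.expectation (decision_kernel 1 ?q 2 a) (?\<Phi> 2 a)) = (\<lambda>_. 1 - ?q)"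
      using signal_prob_bounds[of H] by (simp add: decision_kernel_def)
    ultimately show ?thesis
      unfolding pol by simp
  qed
  also have "\<dots> \<ge> (1 - 2 / 2 ^ H + (1 - ?q)) / 2"
    using prob_act_pmf_notin[OF finite_hard_actions[of H] hard_actions_nonempty[of H] _ a0 \<zeta>]
      small_actions_subset_hard_actions[of H] H
    by (simp add: card_hard_actions)
  also have "(1 - 2 / 2 ^ H + (1 - ?q)) / 2 = 1 - 3 / (2 * 2 ^ H)"
    by (simp add: signal_prob_def field_simps)
  finally show ?thesis .
qed

lemma prob_misleading_episode:
  assumes "3 \<le> H"
  shows "measure_pmf.prob (roll (hard_mdp H 1) pol 1 H 0) {e. uninformative e \<and> fst (e ! 1) = 2}
           = (1 - signal_prob H) / 2"
proof -
  let ?\<Phi> = "\<lambda>(x::nat) (y::nat) (z::nat). of_bool (x = 2 \<and> z = 4) :: real"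
  have "indicator {e. uninformative e \<and> fst (e ! 1) = 2} =
        (\<lambda>e. ?\<Phi> (fst (e ! 1)) (snd (e ! 1)) (fst (e ! 2)))"
    by (auto simp: uninformative_def indicator_def)
  then have "measure_pmf.prob (roll (hard_mdp H 1) pol 1 H 0)
               {e. uninformative e \<and> fst (e ! 1) = 2} =
        measure_pmf.expectation (roll (hard_mdp H 1) pol 1 H 0)
          (\<lambda>e. ?\<Phi> (fst (e ! 1)) (snd (e ! 1)) (fst (e ! 2)))"
    by (simp only: prob_eq_expectation_indicator)
  also have "\<dots> = (1 - signal_prob H) / 2"
    using signal_prob_bounds[of H]
    by (subst expectation_hard_roll[where B=1, OF _ assms]) (simp_all add: decision_kernel_def)
  finally show ?thesis .
qed

lemma prob_misleading_data:
  assumes H: "3 \<le> H" and \<zeta>: "0 \<le> \<zeta>" "\<zeta> \<le> 1"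
    and ora: "is_reg_oracle (hard_reward H) (hard_actions H) H (hard_class H) ora"
    and gsel: "is_greedy_sel (hard_actions H) gsel"
  shows "(1 - signal_prob H) / 2 - real t * (3 / (2 * 2 ^ H)) \<le>
    measure_pmf.prob (data_pmf (hard_mdp H 1) 0 (hard_actions H) H \<zeta> ora gsel (Suc t))
      misleading_data"
proof (induction t)
  case 0
  have "{e. [e] \<in> misleading_data} = {e. uninformative e \<and> fst (e ! 1) = 2}"
    by (auto simp: misleading_data_def uninformative_data_def)
  then have "measure_pmf.prob (data_pmf (hard_mdp H 1) 0 (hard_actions H) H \<zeta> ora gsel (Suc 0))
               misleading_data = (1 - signal_prob H) / 2"
    unfolding prob_data_pmf_Suc data_pmf.simps(1) expectation_return_pmf append_Nil
    by (simp only: prob_misleading_episode[OF H])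
  then show ?case
    by simp
next
  case (Suc t)
  let ?\<epsilon> = "3 / (2 * 2 ^ H) :: real"
  let ?M = "data_pmf (hard_mdp H 1) 0 (hard_actions H) H \<zeta> ora gsel (Suc t)"
  let ?roll = "\<lambda>D. roll (hard_mdp H 1) (behavior \<zeta> (hard_actions H) gsel ora H D) 1 H 0"
  have "(2::real) ^ 3 \<le> 2 ^ H"
    using H by (intro power_increasing) auto
  then have \<epsilon>: "0 \<le> ?\<epsilon>" "?\<epsilon> \<le> 1"
    by (simp_all add: field_simps)
  have extend: "indicator misleading_data D * (1 - ?\<epsilon>) \<le>
      measure_pmf.prob (?roll D) {e. D @ [e] \<in> misleading_data}" for D
  proof (cases "D \<in> misleading_data")
    case True
    then have "{e. D @ [e] \<in> misleading_data} = {e. uninformative e}"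
      by (auto simp: misleading_data_def uninformative_data_def)
    moreover have "gsel 2 (decision_Q 0 (signal_prob H)) 1 \<notin> {0, 1}"
      using small_actions_subset_hard_actions[of H] H
      by (intro greedy_avoids_guessing[OF gsel]) auto
    ultimately show ?thesis
      using True prob_uninformative_episode[OF H \<zeta>]
      by (simp add: behavior_def fitted_misleading_data[OF H ora True])
  qed simp
  have "measure_pmf.expectation ?M (\<lambda>D. indicator misleading_data D * (1 - ?\<epsilon>)) \<le>
        measure_pmf.expectation ?M (\<lambda>D. measure_pmf.prob (?roll D) {e. D @ [e] \<in> misleading_data})"
    using extend \<epsilon>
    by (intro integral_mono integrable_measure_pmf_bounded[where B=1])
       (auto simp: indicator_def measure_pmf.prob_le_1)
  then have "measure_pmf.prob ?M misleading_data * (1 - ?\<epsilon>) \<le>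
        measure_pmf.expectation ?M (\<lambda>D. measure_pmf.prob (?roll D) {e. D @ [e] \<in> misleading_data})"
    by simp
  moreover have "measure_pmf.prob ?M misleading_data * ?\<epsilon> \<le> ?\<epsilon>"
    using \<epsilon> by (intro mult_left_le_one_le) auto
  moreover have "measure_pmf.prob ?M misleading_data * (1 - ?\<epsilon>) =
                 measure_pmf.prob ?M misleading_data - measure_pmf.prob ?M misleading_data * ?\<epsilon>"
    by (simp add: algebra_simps)
  moreover have "real (Suc t) * ?\<epsilon> = real t * ?\<epsilon> + ?\<epsilon>"
    by (simp add: field_simps)
  ultimately show ?case
    using Suc.IH
      prob_data_pmf_Suc[of "hard_mdp H 1" 0 "hard_actions H" H \<zeta> ora gsel "Suc t" misleading_data]
    by linarith
qed

section \<open>The lower bound\<close>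

lemma horizon_cases:
  assumes "2 \<le> H" "real T < 2 ^ H / 8"
  obtains "T = 0" | "3 \<le> H"
  using assms by (cases "H = 2") auto

lemma prob_uninformative_data:
  assumes H: "2 \<le> H" and \<zeta>: "0 \<le> \<zeta>" "\<zeta> \<le> 1" and T: "real T < 2 ^ H / 8"
    and ora: "is_reg_oracle (hard_reward H) (hard_actions H) H (hard_class H) ora"
    and gsel: "is_greedy_sel (hard_actions H) gsel"
  shows "1/4 \<le> measure_pmf.prob
    (data_pmf (hard_mdp H 1) (hard_start H) (hard_actions H) H \<zeta> ora gsel T) uninformative_data"
proof (cases T)
  case (Suc t)
  then have H3: "3 \<le> H"
    using horizon_cases[OF H T] by auto
  let ?M = "data_pmf (hard_mdp H 1) 0 (hard_actions H) H \<zeta> ora gsel (Suc t)"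
  have "(2::real) ^ 3 \<le> 2 ^ H"
    using H3 by (intro power_increasing) auto
  then have "signal_prob H \<le> 1/8"
    by (simp add: signal_prob_def field_simps)
  moreover have "real t * (3 / (2 * 2 ^ H)) \<le> 2 ^ H / 8 * (3 / (2 * 2 ^ H))"
    using T Suc by (intro mult_right_mono) auto
  then have "real t * (3 / (2 * 2 ^ H)) \<le> 3/16"
    by simp
  moreover have "measure_pmf.prob ?M misleading_data \<le> measure_pmf.prob ?M uninformative_data"
    by (intro measure_pmf.finite_measure_mono) (auto simp: misleading_data_def)
  moreover have "hard_start H = 0"
    using H3 by (simp add: hard_start_def)
  ultimately show ?thesis
    using prob_misleading_data[OF H3 \<zeta> ora gsel, of t] Suc by (simp only:) argo
qed (simp add: uninformative_data_def)

lemma hard_exp_subopt_sum: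
  assumes H: "2 \<le> H" and \<zeta>: "0 \<le> \<zeta>" "\<zeta> \<le> 1" and T: "real T < 2 ^ H / 8"
    and ora: "is_reg_oracle (hard_reward H) (hard_actions H) H (hard_class H) ora"
    and gsel: "is_greedy_sel (hard_actions H) gsel"
    and pihat: "\<forall>D h s. set_pmf (pihat D h s) \<subseteq> hard_actions H"
  shows "1/8 \<le>
    exp_subopt (hard_mdp H 1) (hard_reward H) (hard_start H) (hard_actions H) H \<zeta> ora gsel pihat T +
    exp_subopt (hard_mdp H 2) (hard_reward H) (hard_start H) (hard_actions H) H \<zeta> ora gsel pihat T"
proof -
  let ?M = "\<lambda>v. data_pmf (hard_mdp H v) (hard_start H) (hard_actions H) H \<zeta> ora gsel T"
  have "pmf (?M 1) D = pmf (?M 2) D" if "D \<in> uninformative_data" for D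
    using horizon_cases[OF H T]
  proof cases
    case 2
    then show ?thesis
      using pmf_data_hard_mdp_eq[OF 2 that] by (simp add: hard_start_def)
  qed simp
  then have "1/2 * measure_pmf.prob (?M 1) uninformative_data \<le>
    measure_pmf.expectation (?M 1) (\<lambda>D. hard_opt H 1 - hard_value H 1 (pihat D)) +
    measure_pmf.expectation (?M 2) (\<lambda>D. hard_opt H 2 - hard_value H 2 (pihat D))"
    using hard_subopt_bounds pihat hard_subopt_sum[OF H]
    by (intro two_point_lower_bound[where B="real H"]) auto
  then show ?thesis
    using prob_uninformative_data[OF H \<zeta> T ora gsel]
    unfolding exp_subopt_def hard_opt_def hard_value_def by linarith
qed

theorem proposition1:
  shows "\<exists>c0::real. c0 > 0 \<and>
    (\<forall>(H::nat) (\<zeta>::real) (c::real). 1 < H \<and> 0 \<le> \<zeta> \<and> \<zeta> \<le> 1 \<and> 0 < c \<and> c \<le> 1/6 \<longrightarrow>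
      (\<exists>P1 P2 r s1 A Fc.
         finite A \<and> A \<noteq> {} \<and>
         (\<forall>h s a. 0 \<le> r h s a \<and> r h s a \<le> 1) \<and>
         low_rank P1 A H \<and> low_rank P2 A H \<and>
         (\<forall>h\<in>{1..H}. finite (Fc h) \<and> (\<forall>f\<in>Fc h. \<forall>s. \<forall>a\<in>A. 0 \<le> f s a \<and> f s a \<le> real H)) \<and>
         bellman_complete P1 r A H Fc \<and> bellman_complete P2 r A H Fc \<and>
         (\<forall>T::nat. real T < c0 * 2 powr (real H / 2) \<longrightarrow>
            (\<forall>ora gsel pihat.
               is_reg_oracle r A H Fc ora \<and> is_greedy_sel A gsel \<and>
               (\<forall>D h s. set_pmf (pihat D h s) \<subseteq> A) \<longrightarrow>
               c / 32 \<le> max (exp_subopt P1 r s1 A H \<zeta> ora gsel pihat T)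
                             (exp_subopt P2 r s1 A H \<zeta> ora gsel pihat T)))))"
proof (intro exI[of _ "1/8"] conjI allI impI, goal_cases)
  case (2 H \<zeta> c)
  then have H: "2 \<le> H" and \<zeta>: "0 \<le> \<zeta>" "\<zeta> \<le> 1" and c: "c \<le> 1/6"
    by auto
  let ?subopt = "\<lambda>v ora gsel pihat T.
    exp_subopt (hard_mdp H v) (hard_reward H) (hard_start H) (hard_actions H) H \<zeta> ora gsel pihat T"
  have "(2::real) powr (real H / 2) \<le> 2 powr real H"
    by (intro powr_mono) auto
  then have gap: "c / 32 \<le> max (?subopt 1 ora gsel pihat T) (?subopt 2 ora gsel pihat T)"
    if "real T < 1/8 * 2 powr (real H / 2)"
      and "is_reg_oracle (hard_reward H) (hard_actions H) H (hard_class H) ora \<and>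
           is_greedy_sel (hard_actions H) gsel \<and> (\<forall>D h s. set_pmf (pihat D h s) \<subseteq> hard_actions H)"
    for T ora gsel pihat
    using that hard_exp_subopt_sum[OF H \<zeta>, of T ora gsel pihat] c
      max.cobounded1[of "?subopt 1 ora gsel pihat T"]
      max.cobounded2[of _ "?subopt 2 ora gsel pihat T"]
    by (simp add: powr_realpow)
  show ?case
  proof (rule exI[of _ "hard_mdp H 1"], rule exI[of _ "hard_mdp H 2"],
         rule exI[of _ "hard_reward H"], rule exI[of _ "hard_start H"],
         rule exI[of _ "hard_actions H"], rule exI[of _ "hard_class H"], intro conjI)
    show "finite (hard_actions H)" "hard_actions H \<noteq> {}"
      by (rule finite_hard_actions hard_actions_nonempty)+
    show "low_rank (hard_mdp H 1) (hard_actions H) H" "low_rank (hard_mdp H 2) (hard_actions H) H"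
      by (rule low_rank_hard_mdp)+
    show "bellman_complete (hard_mdp H 1) (hard_reward H) (hard_actions H) H (hard_class H)"
      "bellman_complete (hard_mdp H 2) (hard_reward H) (hard_actions H) H (hard_class H)"
      by (simp_all add: bellman_complete_hard_mdp)
  qed (use hard_reward_bounds hard_class_bounds gap in blast)+
qed simp

end
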